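(* Let $\mathsf{X}=\mathsf{Y}=\mathbb{R}^d$ with probability measures $\mu,\nu$ and cost $c(x,y)=\|x-y\|^2$, let $\pi_\varepsilon$ be the $(c,\varepsilon)$-cyclically invariant coupling for each $\varepsilon>0$ (assumed to exist), and assume $\pi_\varepsilon\to\pi_*$ weakly as $\varepsilon\to0$ for some $\pi_*\in\Pi(\mu,\nu)$. Let $\Gamma:=\operatorname{spt}\pi_*$, $\mathsf{X}_0:=\operatorname{proj}_{\mathsf{X}}\Gamma$, $\mathsf{Y}_0:=\operatorname{proj}_{\mathsf{Y}}\Gamma$. Assume there exists a Kantorovich potential $\psi$ such that $I(x,y)=c(x,y)-\psi^c(y)+\psi(x)$ for all $(x,y)\in\mathsf{X}_0\times\mathsf{Y}_0$. Let $\mathsf{X}_0$ be strictly convex, let $\mu\ll\mathcal{L}^d$ (Lebesgue measure), and let $\operatorname{spt}\nu$ be at most countable with no accumulation points. Then $\{I=0\}\cap(\mathsf{X}_0\times\mathsf{Y}_0)=\Gamma$.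
   Context: $\mathsf{X}_0$ is strictly convex if for distinct $x,x'\in\mathsf{X}_0$ the open segment $(x,x')$ lies in $\operatorname{Int}\mathsf{X}_0$. $\Pi(\mu,\nu)$ is the set of couplings and $P:=\mu\otimes\nu$. A coupling $\pi$ is $(c,\varepsilon)$-cyclically invariant if $\pi\sim P$ and its density admits a version $\frac{d\pi}{dP}:\mathsf{X}\times\mathsf{Y}\to(0,\infty)$ with $\prod_{i=1}^k\frac{d\pi}{dP}(x_i,y_i)=\exp\big(-\frac1\varepsilon[\sum_{i=1}^k c(x_i,y_i)-\sum_{i=1}^k c(x_i,y_{i+1})]\big)\prod_{i=1}^k\frac{d\pi}{dP}(x_i,y_{i+1})$ for all $k$ and points, $y_{k+1}:=y_1$. A proper $\psi:\mathsf{X}\to(-\infty,\infty]$ is $c$-convex if $\psi(x)=\sup_y[\zeta(y)-c(x,y)]$ for some $\zeta:\mathsf{Y}\to[-\infty,\infty]$; $\psi^c(y):=\inf_x[\psi(x)+c(x,y)]$; $\partial_c\psi=\{(x,y):\psi^c(y)-\psi(x)=c(x,y)\}$; a Kantorovich potential is a $c$-convex $\psi$ with $\Gamma\subset\partial_c\psi$. The function $I$ is $I(x,y):=\sup_{k\ge2}\sup_{(x_i,y_i)_{i=2}^k\subset\Gamma}\sup_{\sigma\in\Sigma(k)}\sum_{i=1}^k c(x_i,y_i)-\sum_{i=1}^k c(x_i,y_{\sigma(i)})$ with $(x_1,y_1):=(x,y)$ and $\Sigma(k)$ the permutations of $\{1,\dots,k\}$. *)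

theory Defs
  imports "HOL-Probability.Probability"
begin

definition sqcost :: "'a::euclidean_space \<Rightarrow> 'a \<Rightarrow> real" where
  "sqcost x y = (norm (x - y))^2"

definition borel_prob :: "'a::topological_space measure \<Rightarrow> bool" where
  "borel_prob M \<longleftrightarrow> prob_space M \<and> sets M = sets borel"

definition couplings :: "'a::euclidean_space measure \<Rightarrow> 'b::euclidean_space measure
     \<Rightarrow> ('a \<times> 'b) measure set" where
  "couplings \<mu> \<nu> = {\<pi>. prob_space \<pi> \<and> sets \<pi> = sets borel \<and>
      distr \<pi> borel fst = \<mu> \<and> distr \<pi> borel snd = \<nu>}"

definition cyc_invariant ::
  "('a::euclidean_space \<Rightarrow> 'b::euclidean_space \<Rightarrow> real) \<Rightarrow> real \<Rightarrow> 'a measure \<Rightarrow> 'b measure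
    \<Rightarrow> ('a \<times> 'b) measure \<Rightarrow> bool" where
  "cyc_invariant c \<epsilon> \<mu> \<nu> \<pi> \<longleftrightarrow>
     \<pi> \<in> couplings \<mu> \<nu> \<and>
     absolutely_continuous (\<mu> \<Otimes>\<^sub>M \<nu>) \<pi> \<and> absolutely_continuous \<pi> (\<mu> \<Otimes>\<^sub>M \<nu>) \<and>
     (\<exists>f :: 'a \<times> 'b \<Rightarrow> real.
        f \<in> borel_measurable (\<mu> \<Otimes>\<^sub>M \<nu>) \<and> (\<forall>z. f z > 0) \<and>
        \<pi> = density (\<mu> \<Otimes>\<^sub>M \<nu>) (\<lambda>z. ennreal (f z)) \<and>
        (\<forall>k::nat. \<forall>x :: nat \<Rightarrow> 'a. \<forall>y :: nat \<Rightarrow> 'b. k \<ge> 1 \<longrightarrow>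
           (let y' = (\<lambda>i. if i = k then y 1 else y (Suc i)) in
             (\<Prod>i=1..k. f (x i, y i)) =
               exp (- (1 / \<epsilon>) * ((\<Sum>i=1..k. c (x i) (y i)) - (\<Sum>i=1..k. c (x i) (y' i))))
               * (\<Prod>i=1..k. f (x i, y' i)))))"

definition weak_conv_at0 :: "(real \<Rightarrow> 'a::topological_space measure) \<Rightarrow> 'a measure \<Rightarrow> bool" where
  "weak_conv_at0 P Q \<longleftrightarrow>
     (\<forall>f :: 'a \<Rightarrow> real. continuous_on UNIV f \<and> bounded (range f) \<longrightarrow>
        ((\<lambda>\<epsilon>. integral\<^sup>L (P \<epsilon>) f) \<longlongrightarrow> integral\<^sup>L Q f) (at_right 0))"

definition spt :: "'a::topological_space measure \<Rightarrow> 'a set" where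
  "spt M = {z. \<forall>U. open U \<and> z \<in> U \<longrightarrow> emeasure M U > 0}"

definition strictly_convex :: "'a::real_normed_vector set \<Rightarrow> bool" where
  "strictly_convex S \<longleftrightarrow> (\<forall>x\<in>S. \<forall>x'\<in>S. x \<noteq> x' \<longrightarrow> open_segment x x' \<subseteq> interior S)"

definition c_convex :: "('a \<Rightarrow> 'b \<Rightarrow> real) \<Rightarrow> ('a \<Rightarrow> ereal) \<Rightarrow> bool" where
  "c_convex c \<psi> \<longleftrightarrow> (\<forall>x. \<psi> x \<noteq> -\<infinity>) \<and> (\<exists>x. \<psi> x \<noteq> \<infinity>) \<and>
     (\<exists>\<zeta> :: 'b \<Rightarrow> ereal. \<forall>x. \<psi> x = (SUP y. \<zeta> y - ereal (c x y)))"

definition c_transform :: "('a \<Rightarrow> 'b \<Rightarrow> real) \<Rightarrow> ('a \<Rightarrow> ereal) \<Rightarrow> 'b \<Rightarrow> ereal" where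
  "c_transform c \<psi> y = (INF x. \<psi> x + ereal (c x y))"

definition c_subdiff :: "('a \<Rightarrow> 'b \<Rightarrow> real) \<Rightarrow> ('a \<Rightarrow> ereal) \<Rightarrow> ('a \<times> 'b) set" where
  "c_subdiff c \<psi> = {(x, y). c_transform c \<psi> y - \<psi> x = ereal (c x y)}"

definition kantorovich_potential ::
  "('a \<Rightarrow> 'b \<Rightarrow> real) \<Rightarrow> ('a \<times> 'b) set \<Rightarrow> ('a \<Rightarrow> ereal) \<Rightarrow> bool" where
  "kantorovich_potential c \<Gamma> \<psi> \<longleftrightarrow> c_convex c \<psi> \<and> \<Gamma> \<subseteq> c_subdiff c \<psi>"

definition I_fun :: "('a \<Rightarrow> 'b \<Rightarrow> real) \<Rightarrow> ('a \<times> 'b) set \<Rightarrow> 'a \<Rightarrow> 'b \<Rightarrow> ereal" where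
  "I_fun c \<Gamma> x y =
     (SUP t \<in> {(k, p, \<sigma>). (k::nat) \<ge> 2 \<and> (\<forall>i\<in>{2..k}. p i \<in> \<Gamma>) \<and> \<sigma> permutes {1..k}}.
        (case t of (k, p, \<sigma>) \<Rightarrow>
          (let q = p(1 := (x, y)) in
            ereal ((\<Sum>i=1..k. c (fst (q i)) (snd (q i))) - (\<Sum>i=1..k. c (fst (q i)) (snd (q (\<sigma> i))))))))"

end

theory Submission
  imports Defs
begin

(*
  For the quadratic cost, the section C = {x. (x, y) \<in> \<partial>\<^sub>c\<psi>} is a sublevel set of
  \<psi> + |. - y|^2, a supremum of affine functions, hence convex; at interior points of C the
  c-subdifferential of \<psi> is {y} alone. If y lies in the projection of \<Gamma>, it is an atom of \<nu>, so
  the fibre {x. (x, y) \<in> \<Gamma>} has positive \<mu>-mass and, since \<mu> << Lebesgue and the boundary of a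
  convex set is null, it meets the interior of C. Joining such a point to any x \<in> X_0 \<inter> C by a
  segment, which strict convexity keeps inside X_0, shows x lies in the closed fibre. Finally
  I = c - \<psi>^c + \<psi> vanishes exactly on \<partial>\<^sub>c\<psi>.
*)

lemma compl_spt: "- spt M = \<Union>{U. open U \<and> emeasure M U = 0}"
  unfolding spt_def by (auto simp: not_less zero_less_iff_neq_zero)

lemma closed_spt: "closed (spt M)"
  unfolding closed_def compl_spt by auto

lemma null_sets_compl_spt:
  fixes M :: "'a::second_countable_topology measure"
  assumes "sets M = sets borel"
  shows "- spt M \<in> null_sets M"
proof -
  define F where "F = {U. open U \<and> emeasure M U = 0}"
  obtain F' where F': "F' \<subseteq> F" "countable F'" "\<Union>F' = \<Union>F"
    using Lindelof[of F] unfolding F_def by auto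
  have "(\<Union>U\<in>F'. U) \<in> null_sets M"
    using F' assms unfolding F_def by (intro null_sets_UN') (auto simp: subset_eq)
  then show ?thesis
    unfolding compl_spt F_def[symmetric] using F'(3) by simp
qed

lemma emeasure_Int_spt:
  fixes M :: "'a::second_countable_topology measure"
  assumes "sets M = sets borel" "A \<in> sets M"
  shows "emeasure M (A \<inter> spt M) = emeasure M A"
  using emeasure_Diff_null_set[OF null_sets_compl_spt[OF assms(1)] assms(2)]
  by (simp add: Diff_eq)

lemma couplings_emeasure_fst:
  assumes "\<pi> \<in> couplings \<mu> \<nu>" "A \<in> sets borel"
  shows "emeasure \<mu> A = emeasure \<pi> (A \<times> UNIV)"
proof -
  have sets: "sets \<pi> = sets borel" and \<mu>: "\<mu> = distr \<pi> borel fst"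
    using assms(1) by (auto simp: couplings_def)
  have "fst \<in> measurable \<pi> borel"
    unfolding measurable_cong_sets[OF sets refl] by (intro borel_measurable_continuous_onI continuous_intros)
  then have "emeasure \<mu> A = emeasure \<pi> (fst -` A \<inter> space \<pi>)"
    using \<mu> emeasure_distr assms(2) by metis
  also have "fst -` A \<inter> space \<pi> = A \<times> UNIV"
    using sets_eq_imp_space_eq[OF sets] by auto
  finally show ?thesis .
qed

lemma couplings_emeasure_snd:
  assumes "\<pi> \<in> couplings \<mu> \<nu>" "B \<in> sets borel"
  shows "emeasure \<nu> B = emeasure \<pi> (UNIV \<times> B)"
proof -
  have sets: "sets \<pi> = sets borel" and \<nu>: "\<nu> = distr \<pi> borel snd"
    using assms(1) by (auto simp: couplings_def)
  have "snd \<in> measurable \<pi> borel"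
    unfolding measurable_cong_sets[OF sets refl] by (intro borel_measurable_continuous_onI continuous_intros)
  then have "emeasure \<nu> B = emeasure \<pi> (snd -` B \<inter> space \<pi>)"
    using \<nu> emeasure_distr assms(2) by metis
  also have "snd -` B \<inter> space \<pi> = UNIV \<times> B"
    using sets_eq_imp_space_eq[OF sets] by auto
  finally show ?thesis .
qed

lemma couplings_snd_spt_subset:
  assumes "\<pi> \<in> couplings \<mu> \<nu>"
  shows "snd ` spt \<pi> \<subseteq> spt \<nu>"
proof (clarsimp simp: spt_def)
  fix a b and V :: "'b set"
  assume "\<forall>U. open U \<and> (a, b) \<in> U \<longrightarrow> 0 < emeasure \<pi> U" "open V" "b \<in> V"
  then have "emeasure \<pi> (UNIV \<times> V) > 0"
    by (simp add: open_Times)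
  then show "emeasure \<nu> V > 0"
    using couplings_emeasure_snd[OF assms] \<open>open V\<close> by simp
qed

lemma closed_spt_section: "closed {x. (x, y) \<in> spt M}"
proof -
  have "continuous_on UNIV (\<lambda>x. (x, y))"
    by (intro continuous_intros)
  then have "closed ((\<lambda>x. (x, y)) -` spt M \<inter> UNIV)"
    using continuous_on_closed_vimage[OF closed_UNIV] closed_spt by blast
  then show ?thesis
    by (simp add: vimage_def)
qed

lemma emeasure_spt_section_pos:
  fixes \<pi> :: "('a::euclidean_space \<times> 'b::euclidean_space) measure"
  assumes \<pi>: "\<pi> \<in> couplings \<mu> \<nu>" and y: "y \<in> snd ` spt \<pi>" "\<not> y islimpt spt \<nu>"
  shows "emeasure \<mu> {x. (x, y) \<in> spt \<pi>} > 0"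
proof -
  define G where "G = {x. (x, y) \<in> spt \<pi>}"
  have sets: "sets \<pi> = sets borel"
    using \<pi> by (simp add: couplings_def)
  have "closed G"
    unfolding G_def by (rule closed_spt_section)
  then have G: "G \<in> sets borel" "G \<times> UNIV \<in> sets \<pi>"
    unfolding sets by (auto intro!: borel_closed closed_Times)
  obtain V where V: "open V" "y \<in> V" "\<And>z. z \<in> spt \<nu> \<Longrightarrow> z \<in> V \<Longrightarrow> z = y"
    using y(2) unfolding islimpt_def by metis
  have "emeasure \<pi> (UNIV \<times> V) > 0"
    using y(1) V by (auto simp: spt_def open_Times)
  also have "emeasure \<pi> (UNIV \<times> V) = emeasure \<pi> ((UNIV \<times> V) \<inter> spt \<pi>)"
    using V sets by (simp add: emeasure_Int_spt open_Times)
  also have "\<dots> \<le> emeasure \<pi> (G \<times> UNIV)"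
  proof (rule emeasure_mono)
    show "(UNIV \<times> V) \<inter> spt \<pi> \<subseteq> G \<times> UNIV"
      using couplings_snd_spt_subset[OF \<pi>] V(3) unfolding G_def by fastforce
    show "G \<times> UNIV \<in> sets \<pi>"
      by (rule G(2))
  qed
  also have "\<dots> = emeasure \<mu> G"
    using couplings_emeasure_fst[OF \<pi> G(1)] by simp
  finally show ?thesis
    unfolding G_def .
qed

lemma null_sets_subset_frontier_convex:
  fixes C :: "'a::euclidean_space set"
  assumes "absolutely_continuous lborel \<mu>" "convex C" "G \<subseteq> frontier C" "G \<in> sets borel"
  shows "G \<in> null_sets \<mu>"
proof -
  have "negligible G"
    using negligible_convex_frontier[OF assms(2)] assms(3) by (rule negligible_subset)
  then have "G \<in> null_sets lborel"
    using assms(4) by (simp add: negligible_iff_null_sets null_sets_completion_iff)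
  then show ?thesis
    using assms(1) by (auto simp: absolutely_continuous_def)
qed

lemma c_transform_le: "c_transform c \<psi> y \<le> \<psi> x + ereal (c x y)"
  unfolding c_transform_def by (rule INF_lower) simp

lemma c_subdiffE:
  assumes "c_convex c \<psi>" "(x, y) \<in> c_subdiff c \<psi>"
  obtains a b where "\<psi> x = ereal a" "c_transform c \<psi> y = ereal b" "b - a = c x y"
proof -
  have "c_transform c \<psi> y - \<psi> x = ereal (c x y)"
    using assms(2) by (simp add: c_subdiff_def)
  moreover have "\<psi> x \<noteq> -\<infinity>"
    using assms(1) by (simp add: c_convex_def)
  ultimately show ?thesis
    using that by (cases "\<psi> x"; cases "c_transform c \<psi> y") auto
qed

lemma c_subdiff_iff:
  assumes "c_convex c \<psi>" "c_transform c \<psi> y = ereal P"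
  shows "(x, y) \<in> c_subdiff c \<psi> \<longleftrightarrow> \<psi> x = ereal (P - c x y)"
proof -
  have "\<psi> x \<noteq> -\<infinity>"
    using assms(1) by (simp add: c_convex_def)
  then show ?thesis
    using assms(2) by (cases "\<psi> x") (auto simp: c_subdiff_def)
qed

lemma c_subdiff_iff_gap_eq_0:
  assumes "c_convex c \<psi>" "c_transform c \<psi> y = ereal P"
  shows "(x, y) \<in> c_subdiff c \<psi> \<longleftrightarrow> ereal (c x y) - c_transform c \<psi> y + \<psi> x = 0"
proof -
  have "\<psi> x \<noteq> -\<infinity>"
    using assms(1) by (simp add: c_convex_def)
  then show ?thesis
    unfolding c_subdiff_iff[OF assms] assms(2) by (cases "\<psi> x") auto
qed

lemma c_subdiff_section_eq:
  assumes "c_convex c \<psi>" "c_transform c \<psi> y = ereal P"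
  shows "{x. (x, y) \<in> c_subdiff c \<psi>} = {x. \<psi> x \<le> ereal (P - c x y)}"
proof -
  have "ereal (P - c x y) \<le> \<psi> x" for x
    using c_transform_le[of c \<psi> y x] assms(2) by (cases "\<psi> x") auto
  then show ?thesis
    unfolding c_subdiff_iff[OF assms] by (auto intro: order.antisym)
qed

lemma sqcost_diff_affine:
  fixes x y y' :: "'a::euclidean_space"
  shows "sqcost x y' - sqcost x y = (y' \<bullet> y' - y \<bullet> y) + (2 *\<^sub>R (y - y')) \<bullet> x"
  unfolding sqcost_def power2_norm_eq_inner
  by (simp add: inner_simps algebra_simps inner_commute)

lemma convex_ereal_le_affine: "convex {x. z \<le> ereal (b + a \<bullet> x)}"
proof (cases z)
  case (real r)
  then have "{x. z \<le> ereal (b + a \<bullet> x)} = {x. a \<bullet> x \<ge> r - b}"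
    by auto
  then show ?thesis
    using convex_halfspace_ge by metis
qed auto

lemma convex_sqcost_subdiff_section:
  fixes \<psi> :: "'a::euclidean_space \<Rightarrow> ereal"
  assumes \<psi>: "c_convex sqcost \<psi>"
  shows "convex {x. (x, y) \<in> c_subdiff sqcost \<psi>}"
proof (cases "\<exists>x. (x, y) \<in> c_subdiff sqcost \<psi>")
  case True
  then obtain P where P: "c_transform sqcost \<psi> y = ereal P"
    using c_subdiffE[OF \<psi>] by metis
  obtain \<zeta> :: "'a \<Rightarrow> ereal" where \<zeta>: "\<And>x. \<psi> x = (SUP y'. \<zeta> y' - ereal (sqcost x y'))"
    using \<psi> by (auto simp: c_convex_def)
  have "\<psi> x \<le> ereal (P - sqcost x y) \<longleftrightarrow>
        (\<forall>y'. \<zeta> y' \<le> ereal ((P + (y' \<bullet> y' - y \<bullet> y)) + (2 *\<^sub>R (y - y')) \<bullet> x))" for x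
  proof -
    have "\<zeta> y' - ereal (sqcost x y') \<le> ereal (P - sqcost x y) \<longleftrightarrow>
          \<zeta> y' \<le> ereal ((P + (y' \<bullet> y' - y \<bullet> y)) + (2 *\<^sub>R (y - y')) \<bullet> x)" for y'
      using sqcost_diff_affine[of x y' y] by (cases "\<zeta> y'") (auto simp: algebra_simps)
    then show ?thesis
      unfolding \<zeta> by (simp add: SUP_le_iff)
  qed
  then have "{x. (x, y) \<in> c_subdiff sqcost \<psi>} =
      (\<Inter>y'. {x. \<zeta> y' \<le> ereal ((P + (y' \<bullet> y' - y \<bullet> y)) + (2 *\<^sub>R (y - y')) \<bullet> x)})"
    unfolding c_subdiff_section_eq[OF \<psi> P] by auto
  then show ?thesis
    by (simp only:) (rule convex_INT, rule convex_ereal_le_affine)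
qed simp

text \<open>Near an interior point \<open>w\<close> of the section, \<open>\<psi> = P - c(\<cdot>, y)\<close>; so if also \<open>(w, y') \<in> \<partial>\<^sub>c\<psi>\<close>,
  the affine function \<open>c(\<cdot>, y') - c(\<cdot>, y)\<close>, of gradient \<open>2(y - y')\<close>, would attain a local minimum at \<open>w\<close>.\<close>
lemma sqcost_subdiff_unique_at_interior:
  fixes \<psi> :: "'a::euclidean_space \<Rightarrow> ereal"
  assumes \<psi>: "c_convex sqcost \<psi>"
    and w: "w \<in> interior {x. (x, y) \<in> c_subdiff sqcost \<psi>}"
    and wy': "(w, y') \<in> c_subdiff sqcost \<psi>"
  shows "y' = y"
proof (rule ccontr)
  assume "y' \<noteq> y"
  define C where "C = {x. (x, y) \<in> c_subdiff sqcost \<psi>}"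
  have "w \<in> C"
    using w interior_subset unfolding C_def by blast
  then obtain P where P: "c_transform sqcost \<psi> y = ereal P"
    using c_subdiffE[OF \<psi>] unfolding C_def by blast
  obtain Q where Q: "c_transform sqcost \<psi> y' = ereal Q"
    using c_subdiffE[OF \<psi> wy'] by metis
  have C_eq: "C = {x. \<psi> x \<le> ereal (P - sqcost x y)}"
    unfolding C_def by (rule c_subdiff_section_eq[OF \<psi> P])
  have \<psi>w: "\<psi> w = ereal (P - sqcost w y)" "\<psi> w = ereal (Q - sqcost w y')"
    using \<open>w \<in> C\<close> wy' c_subdiff_iff[OF \<psi> P] c_subdiff_iff[OF \<psi> Q] unfolding C_def by auto
  obtain e where e: "e > 0" "ball w e \<subseteq> C"
    using w unfolding C_def[symmetric] by (meson mem_interior)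
  define d where "d = (e / (2 * norm (y' - y))) *\<^sub>R (y' - y)"
  have "norm d < e"
    using \<open>y' \<noteq> y\<close> e(1) by (simp add: d_def)
  then have "w + d \<in> C"
    using e(2) by (auto simp: dist_norm)
  then have "\<psi> (w + d) \<le> ereal (P - sqcost (w + d) y)"
    using C_eq by blast
  moreover have "ereal Q \<le> \<psi> (w + d) + ereal (sqcost (w + d) y')"
    using c_transform_le[of sqcost \<psi> y' "w + d"] Q by simp
  ultimately have "Q - sqcost (w + d) y' \<le> P - sqcost (w + d) y"
    by (cases "\<psi> (w + d)") auto
  moreover have "d \<bullet> (y' - y) > 0"
    using \<open>y' \<noteq> y\<close> e(1) by (simp add: d_def inner_commute power2_norm_eq_inner[symmetric])
  moreover have "(2 *\<^sub>R (y - y')) \<bullet> (w + d) = (2 *\<^sub>R (y - y')) \<bullet> w - 2 * (d \<bullet> (y' - y))"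
    by (simp add: inner_simps inner_commute algebra_simps)
  ultimately show False
    using \<psi>w sqcost_diff_affine[of w y' y] sqcost_diff_affine[of "w + d" y' y] by simp
qed

lemma spt_section_Int_interior_nonempty:
  fixes \<pi> :: "('a::euclidean_space \<times> 'b::euclidean_space) measure"
  assumes \<pi>: "\<pi> \<in> couplings \<mu> \<nu>" and y: "y \<in> snd ` spt \<pi>" "\<not> y islimpt spt \<nu>"
    and ac: "absolutely_continuous lborel \<mu>"
    and C: "convex C" "{x. (x, y) \<in> spt \<pi>} \<subseteq> C"
  shows "{x. (x, y) \<in> spt \<pi>} \<inter> interior C \<noteq> {}"
proof
  define G where "G = {x. (x, y) \<in> spt \<pi>}"
  assume "G \<inter> interior C = {}"
  then have "G \<subseteq> frontier C"
    using C(2) closure_subset unfolding frontier_def G_def by blast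
  then have "G \<in> null_sets \<mu>"
    using closed_spt_section unfolding G_def
    by (intro null_sets_subset_frontier_convex[OF ac C(1)] borel_closed)
  moreover have "emeasure \<mu> G > 0"
    unfolding G_def by (rule emeasure_spt_section_pos[OF \<pi> y])
  ultimately show False
    by (simp add: null_setsD1)
qed

lemma strictly_convex_Int_closure_subset:
  fixes C S G :: "'a::euclidean_space set"
  assumes "convex C" "strictly_convex S" "closed G"
    and "S \<inter> interior C \<subseteq> G" "z \<in> S \<inter> interior C"
  shows "S \<inter> closure C \<subseteq> G"
proof
  fix x assume x: "x \<in> S \<inter> closure C"
  show "x \<in> G"
  proof (cases "x \<in> interior C")
    case True
    then show ?thesis
      using x assms(4) by blast
  next
    case False
    then have "z \<noteq> x"
      using assms(5) by auto
    have "rel_interior C = interior C"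
      using assms(5) by (intro rel_interior_nonempty_interior) auto
    then have "open_segment z x \<subseteq> interior C"
      using rel_interior_closure_convex_segment[OF assms(1), of z x] assms(5) x by simp
    moreover have "open_segment z x \<subseteq> S"
      using assms(2,5) \<open>z \<noteq> x\<close> x interior_subset unfolding strictly_convex_def by blast
    ultimately have "closure (open_segment z x) \<subseteq> G"
      using assms(3,4) by (intro closure_minimal) auto
    then show ?thesis
      using \<open>z \<noteq> x\<close> ends_in_segment(2)[of z x] by auto
  qed
qed

lemma sqcost_subdiff_Int_proj_spt:
  fixes \<pi> :: "('a::euclidean_space \<times> 'a) measure"
  assumes \<pi>: "\<pi> \<in> couplings \<mu> \<nu>"
    and \<psi>: "c_convex sqcost \<psi>" "spt \<pi> \<subseteq> c_subdiff sqcost \<psi>"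
    and sconv: "strictly_convex (fst ` spt \<pi>)"
    and ac: "absolutely_continuous lborel \<mu>"
    and discr: "\<forall>z. \<not> z islimpt spt \<nu>"
  shows "c_subdiff sqcost \<psi> \<inter> (fst ` spt \<pi> \<times> snd ` spt \<pi>) = spt \<pi>"
proof (intro equalityI subsetI)
  fix p assume "p \<in> c_subdiff sqcost \<psi> \<inter> (fst ` spt \<pi> \<times> snd ` spt \<pi>)"
  then obtain x y where p: "p = (x, y)" and xy: "(x, y) \<in> c_subdiff sqcost \<psi>"
    and x: "x \<in> fst ` spt \<pi>" and y: "y \<in> snd ` spt \<pi>"
    by auto
  define C where "C = {x. (x, y) \<in> c_subdiff sqcost \<psi>}"
  define G where "G = {x. (x, y) \<in> spt \<pi>}"
  have "convex C"
    unfolding C_def using \<psi>(1) by (rule convex_sqcost_subdiff_section)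
  have "G \<subseteq> C"
    using \<psi>(2) unfolding G_def C_def by blast
  have interior_in_G: "fst ` spt \<pi> \<inter> interior C \<subseteq> G"
  proof
    fix w assume w: "w \<in> fst ` spt \<pi> \<inter> interior C"
    then obtain y' where "(w, y') \<in> spt \<pi>"
      by force
    moreover have "y' = y"
      using sqcost_subdiff_unique_at_interior[OF \<psi>(1)] w calculation \<psi>(2) unfolding C_def by blast
    ultimately show "w \<in> G"
      unfolding G_def by simp
  qed
  obtain z where z: "z \<in> G" "z \<in> interior C"
    using spt_section_Int_interior_nonempty[OF \<pi> y _ ac \<open>convex C\<close>] discr \<open>G \<subseteq> C\<close>
    unfolding G_def by blast
  then have "z \<in> fst ` spt \<pi>"
    unfolding G_def by (metis fst_conv image_eqI mem_Collect_eq)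
  moreover have "x \<in> closure C"
    using xy closure_subset[of C] unfolding C_def by (simp add: subset_iff)
  ultimately have "x \<in> G"
    using strictly_convex_Int_closure_subset[OF \<open>convex C\<close> sconv closed_spt_section interior_in_G[unfolded G_def]]
      x z(2) unfolding G_def by blast
  then show "p \<in> spt \<pi>"
    unfolding p G_def by simp
next
  fix p assume "p \<in> spt \<pi>"
  then show "p \<in> c_subdiff sqcost \<psi> \<inter> (fst ` spt \<pi> \<times> snd ` spt \<pi>)"
    using \<psi>(2) by (auto simp: mem_Times_iff)
qed

theorem proposition5p5:
  fixes \<mu> \<nu> :: "'a::euclidean_space measure"
    and \<pi>\<epsilon> :: "real \<Rightarrow> ('a \<times> 'a) measure"
    and \<pi>\<^sub>s :: "('a \<times> 'a) measure"
  assumes \<mu>: "borel_prob \<mu>" and \<nu>: "borel_prob \<nu>"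
    and cyc: "\<And>\<epsilon>. \<epsilon> > 0 \<Longrightarrow> cyc_invariant sqcost \<epsilon> \<mu> \<nu> (\<pi>\<epsilon> \<epsilon>)"
    and lim: "\<pi>\<^sub>s \<in> couplings \<mu> \<nu>" "weak_conv_at0 \<pi>\<epsilon> \<pi>\<^sub>s"
    and pot: "\<exists>\<psi>. kantorovich_potential sqcost (spt \<pi>\<^sub>s) \<psi> \<and>
               (\<forall>x \<in> fst ` spt \<pi>\<^sub>s. \<forall>y \<in> snd ` spt \<pi>\<^sub>s.
                  I_fun sqcost (spt \<pi>\<^sub>s) x y
                    = ereal (sqcost x y) - c_transform sqcost \<psi> y + \<psi> x)"
    and sconv: "strictly_convex (fst ` spt \<pi>\<^sub>s)"
    and ac: "absolutely_continuous lborel \<mu>"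
    and discr: "countable (spt \<nu>)" "\<forall>z. \<not> z islimpt spt \<nu>"
  shows "{(x, y). I_fun sqcost (spt \<pi>\<^sub>s) x y = 0} \<inter> (fst ` spt \<pi>\<^sub>s \<times> snd ` spt \<pi>\<^sub>s)
           = spt \<pi>\<^sub>s"
proof -
  obtain \<psi> where kp: "kantorovich_potential sqcost (spt \<pi>\<^sub>s) \<psi>"
    and I_eq: "\<forall>x \<in> fst ` spt \<pi>\<^sub>s. \<forall>y \<in> snd ` spt \<pi>\<^sub>s.
                 I_fun sqcost (spt \<pi>\<^sub>s) x y = ereal (sqcost x y) - c_transform sqcost \<psi> y + \<psi> x"
    using pot by blast
  then have \<psi>: "c_convex sqcost \<psi>" "spt \<pi>\<^sub>s \<subseteq> c_subdiff sqcost \<psi>"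
    by (auto simp: kantorovich_potential_def)
  have "I_fun sqcost (spt \<pi>\<^sub>s) x y = 0 \<longleftrightarrow> (x, y) \<in> c_subdiff sqcost \<psi>"
    if xy: "x \<in> fst ` spt \<pi>\<^sub>s" "y \<in> snd ` spt \<pi>\<^sub>s" for x y
  proof -
    obtain x' where "(x', y) \<in> c_subdiff sqcost \<psi>"
      using xy(2) \<psi>(2) by force
    then obtain P where "c_transform sqcost \<psi> y = ereal P"
      using c_subdiffE[OF \<psi>(1)] by metis
    then have "(x, y) \<in> c_subdiff sqcost \<psi> \<longleftrightarrow>
        ereal (sqcost x y) - c_transform sqcost \<psi> y + \<psi> x = 0"
      by (rule c_subdiff_iff_gap_eq_0[OF \<psi>(1)])
    moreover have "I_fun sqcost (spt \<pi>\<^sub>s) x y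
        = ereal (sqcost x y) - c_transform sqcost \<psi> y + \<psi> x"
      using I_eq xy by blast
    ultimately show ?thesis
      by simp
  qed
  then have "{(x, y). I_fun sqcost (spt \<pi>\<^sub>s) x y = 0} \<inter> (fst ` spt \<pi>\<^sub>s \<times> snd ` spt \<pi>\<^sub>s)
      = c_subdiff sqcost \<psi> \<inter> (fst ` spt \<pi>\<^sub>s \<times> snd ` spt \<pi>\<^sub>s)"
    by auto
  also have "\<dots> = spt \<pi>\<^sub>s"
    using sqcost_subdiff_Int_proj_spt[OF lim(1) \<psi> sconv ac discr(2)] .
  finally show ?thesis .
qed

end
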